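(* In the setting described in the context, suppose that the path satisfies $\lim_{\ell\to\infty}(\vec n_\ell)_j=\infty$ for every $j=1,\dots,r$. Then for every $\ell\ge0$, $x q_\ell(x)$ is a finite linear combination of the functions $q_0,q_1,\dots$; more precisely, \[ x\,q_\ell(x)=\sum_{k=0}^{\infty}J_{k,\ell}\,q_k(x), \] where only finitely many terms of the sum are nonzero (so multiplication by $x$ maps $\operatorname{span}\{q_k:k\ge0\}$ into itself, with matrix the transpose of $J$).
   Context: Let $r\ge1$ and let $\mu_1,\dots,\mu_r$ be positive Borel measures on $\mathbb{R}$ with all moments finite, forming a perfect system: for every $\vec n\in\mathbb{N}_0^r$ there is a monic polynomial $P_{\vec n}$ of degree $|\vec n|=n_1+\dots+n_r$ with $\int x^kP_{\vec n}\,d\mu_j=0$ for $0\le k\le n_j-1$, $1\le j\le r$. The type I multiple orthogonal polynomials $A_{\vec n}=(A_{\vec n,1},\dots,A_{\vec n,r})$ are defined by $\deg A_{\vec n,j}\le n_j-1$, $\sum_{j}\int x^kA_{\vec n,j}\,d\mu_j=0$ for $0\le k\le|\vec n|-2$ and $\sum_j\int x^{|\vec n|-1}A_{\vec n,j}\,d\mu_j=1$ (they exist uniquely for perfect systems). Let $\mu$ be a positive measure with $\mu_j\ll\mu$ for all $j$, $w_j=d\mu_j/d\mu$, and $Q_{\vec n}=\sum_{j=1}^rA_{\vec n,j}w_j$. Fix a path $(\vec n_\ell)_{\ell\ge0}$ with $|\vec n_\ell|=\ell$ and $\vec n_{\ell+1}=\vec n_\ell+\vec e_{i_\ell}$ ($\vec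 e_j$ the $j$-th unit vector, $i_\ell\in\{1,\dots,r\}$), and set $p_\ell=P_{\vec n_\ell}$, $q_\ell=Q_{\vec n_{\ell+1}}$; these satisfy $\int p_\ell q_{\ell'}\,d\mu=\delta_{\ell,\ell'}$. The matrix $J=[J_{\ell,k}]_{\ell,k\ge0}$ is defined by $xp_\ell=\sum_{k=0}^{\ell+1}J_{\ell,k}p_k$, with $J_{\ell,k}=0$ for $k>\ell+1$. *)

theory Defs
  imports "HOL-Analysis.Analysis" "HOL-Probability.Probability" "HOL-Computational_Algebra.Polynomial"
begin

text \<open>Multi-indices are functions nat => nat; only the values on {1..r} matter.\<close>

definition mi_size :: "nat \<Rightarrow> (nat \<Rightarrow> nat) \<Rightarrow> nat" where
  "mi_size r n = (\<Sum>j=1..r. n j)"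

definition typeII :: "nat \<Rightarrow> (nat \<Rightarrow> real measure) \<Rightarrow> (nat \<Rightarrow> nat) \<Rightarrow> real poly \<Rightarrow> bool" where
  "typeII r \<mu>s n P \<longleftrightarrow> degree P = mi_size r n \<and> lead_coeff P = 1 \<and>
     (\<forall>j\<in>{1..r}. \<forall>k<n j. (\<integral>x. x ^ k * poly P x \<partial>(\<mu>s j)) = 0)"

definition perfect_system :: "nat \<Rightarrow> (nat \<Rightarrow> real measure) \<Rightarrow> bool" where
  "perfect_system r \<mu>s \<longleftrightarrow> (\<forall>n. \<exists>!P. typeII r \<mu>s n P)"

definition typeII_poly :: "nat \<Rightarrow> (nat \<Rightarrow> real measure) \<Rightarrow> (nat \<Rightarrow> nat) \<Rightarrow> real poly" where
  "typeII_poly r \<mu>s n = (THE P. typeII r \<mu>s n P)"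

text \<open>Type I vector (A_1,...,A_r), with A_j = 0 outside {1..r}; deg A_j \<le> n_j - 1 means A_j = 0 when n_j = 0.\<close>
definition typeI :: "nat \<Rightarrow> (nat \<Rightarrow> real measure) \<Rightarrow> (nat \<Rightarrow> nat) \<Rightarrow> (nat \<Rightarrow> real poly) \<Rightarrow> bool" where
  "typeI r \<mu>s n A \<longleftrightarrow>
     (\<forall>j. j \<notin> {1..r} \<longrightarrow> A j = 0) \<and>
     (\<forall>j\<in>{1..r}. A j = 0 \<or> degree (A j) < n j) \<and>
     (\<forall>k. k + 2 \<le> mi_size r n \<longrightarrow> (\<Sum>j=1..r. (\<integral>x. x ^ k * poly (A j) x \<partial>(\<mu>s j))) = 0) \<and>
     (\<Sum>j=1..r. (\<integral>x. x ^ (mi_size r n - 1) * poly (A j) x \<partial>(\<mu>s j))) = 1"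

definition typeI_vec :: "nat \<Rightarrow> (nat \<Rightarrow> real measure) \<Rightarrow> (nat \<Rightarrow> nat) \<Rightarrow> nat \<Rightarrow> real poly" where
  "typeI_vec r \<mu>s n = (THE A. typeI r \<mu>s n A)"

definition Qfun :: "nat \<Rightarrow> (nat \<Rightarrow> real measure) \<Rightarrow> (nat \<Rightarrow> real \<Rightarrow> real) \<Rightarrow> (nat \<Rightarrow> nat) \<Rightarrow> real \<Rightarrow> real" where
  "Qfun r \<mu>s w n x = (\<Sum>j=1..r. poly (typeI_vec r \<mu>s n j) x * w j x)"

definition is_path :: "nat \<Rightarrow> (nat \<Rightarrow> nat \<Rightarrow> nat) \<Rightarrow> bool" where
  "is_path r ns \<longleftrightarrow> (\<forall>j\<in>{1..r}. ns 0 j = 0) \<and>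
     (\<forall>l. \<exists>i\<in>{1..r}. ns (Suc l) = (ns l)(i := ns l i + 1))"

definition Jmat :: "nat \<Rightarrow> (nat \<Rightarrow> real measure) \<Rightarrow> (nat \<Rightarrow> nat \<Rightarrow> nat) \<Rightarrow> nat \<Rightarrow> nat \<Rightarrow> real" where
  "Jmat r \<mu>s ns l =
     (THE c. (\<forall>k>Suc l. c k = 0) \<and>
        [:0, 1:] * typeII_poly r \<mu>s (ns l) = (\<Sum>k\<le>Suc l. smult (c k) (typeII_poly r \<mu>s (ns k))))"

end

theory Submission
  imports Defs "Jordan_Normal_Form.Determinant"
begin

(* With the pairing <q, B> = sum_j int q B_j d mu_j, the polynomials p_k and the type I vectors
   A_l := A_{n_{l+1}} are biorthogonal, and J_{k,l} = <x p_k, A_l> = <p_k, x A_l>.  Choose N with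
   n_N > n_{l+1} componentwise.  For k >= N the vector x A_l satisfies the degree bounds of n_k,
   so it is orthogonal to p_k and J_{k,l} = 0.  The difference x A_l - sum_{k<=N} J_{k,l} A_k
   then satisfies the degree bounds of n_{N+1} and is orthogonal to p_0, ..., p_N, hence to all
   polynomials of degree <= N; since n_{N+1} is normal, its moment matrix is invertible and the
   difference vanishes.  Multiplying by the weights w_j and summing gives x q_l = sum_k J_{k,l} q_k. *)

lemma det_mat_neq_0_if_rows_independent:
  fixes M :: "nat \<Rightarrow> nat \<Rightarrow> real"
  assumes inj: "\<And>v. \<forall>a<N. (\<Sum>i<N. v i * M i a) = 0 \<Longrightarrow> \<forall>i<N. v i = 0"
  shows "det (mat N N (\<lambda>(i, a). M i a)) \<noteq> 0"
proof -
  define A where "A = mat N N (\<lambda>(i, a). M i a)"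
  have A: "A \<in> carrier_mat N N" unfolding A_def by simp
  have At: "transpose_mat A \<in> carrier_mat N N" using A by simp
  have "det (transpose_mat A) \<noteq> 0"
  proof
    assume "det (transpose_mat A) = 0"
    then obtain v where v: "v \<in> carrier_vec N" "v \<noteq> 0\<^sub>v N" "transpose_mat A *\<^sub>v v = 0\<^sub>v N"
      using det_0_iff_vec_prod_zero_field[OF At] by blast
    have "\<forall>a<N. (\<Sum>i<N. v $ i * M i a) = 0"
    proof (intro allI impI)
      fix a assume a: "a < N"
      have "(transpose_mat A *\<^sub>v v) $ a = 0" using v(3) a by simp
      then show "(\<Sum>i<N. v $ i * M i a) = 0"
        using a v(1) unfolding A_def
        by (simp add: mult_mat_vec_def scalar_prod_def lessThan_atLeast0 mult.commute)
    qed
    then have "\<forall>i<N. v $ i = 0" by (rule inj)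
    then have "v = 0\<^sub>v N" using v(1) by (intro eq_vecI) auto
    with v(2) show False by simp
  qed
  then show ?thesis using det_transpose[OF A] unfolding A_def by simp
qed

lemma square_system_nat:
  fixes M :: "nat \<Rightarrow> nat \<Rightarrow> real"
  assumes inj: "\<And>v. \<forall>a<N. (\<Sum>i<N. v i * M i a) = 0 \<Longrightarrow> \<forall>i<N. v i = 0"
  shows "\<exists>b. \<forall>i<N. (\<Sum>a<N. M i a * b a) = e i"
    and "\<forall>i<N. (\<Sum>a<N. M i a * b a) = 0 \<Longrightarrow> \<forall>a<N. b a = 0"
proof -
  define A where "A = mat N N (\<lambda>(i, a). M i a)"
  have A: "A \<in> carrier_mat N N" unfolding A_def by simp
  have det_A: "det A \<noteq> 0"
    unfolding A_def using inj by (rule det_mat_neq_0_if_rows_independent)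
  have "A \<in> Units (ring_mat TYPE(real) N ())" by (rule det_non_zero_imp_unit[OF A det_A])
  then obtain B where B: "B \<in> carrier_mat N N" "A * B = 1\<^sub>m N"
    unfolding Units_def ring_mat_def by auto
  define b where "b = B *\<^sub>v vec N e"
  have b: "b \<in> carrier_vec N" unfolding b_def using B(1) by simp
  have Ab: "A *\<^sub>v b = vec N e"
    unfolding b_def using A B by (metis assoc_mult_mat_vec one_mult_mat_vec vec_carrier)
  have "(\<Sum>a<N. M i a * b $ a) = e i" if i: "i < N" for i
  proof -
    have "(A *\<^sub>v b) $ i = e i" using Ab i by simp
    then show ?thesis
      using i b unfolding A_def by (simp add: mult_mat_vec_def scalar_prod_def lessThan_atLeast0)
  qed
  then show "\<exists>b. \<forall>i<N. (\<Sum>a<N. M i a * b a) = e i" by blast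
  show "\<forall>a<N. b a = 0" if "\<forall>i<N. (\<Sum>a<N. M i a * b a) = 0" for b
  proof -
    have "A *\<^sub>v vec N b = 0\<^sub>v N"
      using that unfolding A_def
      by (intro eq_vecI) (auto simp: mult_mat_vec_def scalar_prod_def lessThan_atLeast0)
    then have "vec N b = 0\<^sub>v N"
      using det_0_iff_vec_prod_zero_field[OF A] det_A by (metis vec_carrier)
    then show ?thesis by (metis index_vec index_zero_vec(1))
  qed
qed

lemma square_system:
  fixes M :: "nat \<Rightarrow> 'k \<Rightarrow> real"
  assumes K: "finite K" "card K = N"
    and inj: "\<And>v. \<forall>a\<in>K. (\<Sum>i<N. v i * M i a) = 0 \<Longrightarrow> \<forall>i<N. v i = 0"
  shows "\<exists>b. \<forall>i<N. (\<Sum>a\<in>K. M i a * b a) = e i"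
    and "\<forall>i<N. (\<Sum>a\<in>K. M i a * b a) = 0 \<Longrightarrow> \<forall>a\<in>K. b a = 0"
proof -
  obtain g where g: "bij_betw g {..<N} K"
    using ex_bij_betw_nat_finite[OF K(1)] K(2) lessThan_atLeast0 by metis
  have reindex: "(\<Sum>a\<in>K. f a) = (\<Sum>a<N. f (g a))" for f :: "'k \<Rightarrow> real"
    by (rule sum.reindex_bij_betw[OF g, symmetric])
  have onto: "\<exists>a'<N. a = g a'" if "a \<in> K" for a
    using that bij_betw_imp_surj_on[OF g] by auto
  have inj_g: "\<forall>i<N. v i = 0" if v: "\<forall>a<N. (\<Sum>i<N. v i * M i (g a)) = 0" for v
  proof (rule inj, intro ballI)
    fix a assume "a \<in> K"
    then obtain a' where "a' < N" "a = g a'" using onto by blast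
    then show "(\<Sum>i<N. v i * M i a) = 0" using v by simp
  qed
  obtain b where b: "\<forall>i<N. (\<Sum>a<N. M i (g a) * b a) = e i"
    using square_system_nat(1)[of N "\<lambda>i a. M i (g a)", OF inj_g] by blast
  have "inv_into {..<N} g (g a) = a" if "a < N" for a
    using bij_betw_imp_inj_on[OF g] that by simp
  then have "(\<Sum>a\<in>K. M i a * b (inv_into {..<N} g a)) = (\<Sum>a<N. M i (g a) * b a)" for i
    unfolding reindex by (intro sum.cong) auto
  then show "\<exists>b. \<forall>i<N. (\<Sum>a\<in>K. M i a * b a) = e i"
    using b by (intro exI[of _ "\<lambda>a. b (inv_into {..<N} g a)"]) simp
  show "\<forall>a\<in>K. b a = 0" if "\<forall>i<N. (\<Sum>a\<in>K. M i a * b a) = 0" for b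
  proof -
    have "\<forall>a<N. b (g a) = 0"
      using that square_system_nat(2)[of N "\<lambda>i a. M i (g a)", OF inj_g] unfolding reindex by simp
    then show ?thesis using onto by blast
  qed
qed

definition deg_less :: "'a::zero poly \<Rightarrow> nat \<Rightarrow> bool" where
  "deg_less Q n \<longleftrightarrow> (\<forall>i\<ge>n. coeff Q i = 0)"

lemma deg_less_iff: "deg_less Q n \<longleftrightarrow> Q = 0 \<or> degree Q < n"
proof
  assume "deg_less Q n"
  then show "Q = 0 \<or> degree Q < n"
    unfolding deg_less_def by (metis leading_coeff_0_iff linorder_not_le)
qed (auto simp: deg_less_def coeff_eq_0)

lemma deg_less_eq_sum_monom: "deg_less Q n \<Longrightarrow> Q = (\<Sum>i<n. monom (coeff Q i) i)"
  unfolding deg_less_def by (auto simp: poly_eq_iff coeff_sum)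

lemma deg_less_sum_monom: "deg_less (\<Sum>i<n. monom (c i) i) n"
  unfolding deg_less_def by (auto simp: coeff_sum)

lemma deg_less_diff: "deg_less P n \<Longrightarrow> deg_less Q n \<Longrightarrow> deg_less (P - Q) n"
  and deg_less_smult: "deg_less P n \<Longrightarrow> deg_less (Polynomial.smult c P) n"
  and deg_less_mono: "deg_less P n \<Longrightarrow> n \<le> m \<Longrightarrow> deg_less P m"
  unfolding deg_less_def by auto

lemma deg_less_x_mult: "deg_less P n \<Longrightarrow> deg_less ([:0, 1:] * P) (Suc n)"
  unfolding deg_less_def by (auto simp: coeff_pCons split: nat.splits)

lemma deg_less_sum: "(\<And>k. k \<in> K \<Longrightarrow> deg_less (f k) n) \<Longrightarrow> deg_less (\<Sum>k\<in>K. f k) n"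
  unfolding deg_less_def by (cases "finite K") (auto simp: coeff_sum)

lemma monic_basis_expansion:
  fixes p :: "nat \<Rightarrow> 'a::comm_ring_1 poly"
  assumes deg: "\<And>k. degree (p k) = k" and monic: "\<And>k. lead_coeff (p k) = 1"
  shows "degree Q \<le> d \<Longrightarrow> \<exists>c. Q = (\<Sum>k\<le>d. Polynomial.smult (c k) (p k))"
proof (induction d arbitrary: Q)
  case 0
  have "p 0 = 1" using deg[of 0] monic[of 0] by (metis degree_0_id one_pCons)
  moreover have "Q = [:coeff Q 0:]" using 0 by (simp add: degree_0_id)
  ultimately have "Q = Polynomial.smult (coeff Q 0) (p 0)" by simp
  then show ?case by (intro exI[where x="\<lambda>_. coeff Q 0"]) simp
next
  case (Suc d)
  define Q' where "Q' = Q - Polynomial.smult (coeff Q (Suc d)) (p (Suc d))"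
  have "degree Q' \<le> d"
  proof (rule degree_le, intro allI impI)
    fix i assume "d < i"
    then consider "i = Suc d" | "Suc d < i" by linarith
    then show "coeff Q' i = 0"
      by cases (use Suc.prems deg[of "Suc d"] monic[of "Suc d"] in \<open>auto simp: Q'_def coeff_eq_0\<close>)
  qed
  then obtain c where c: "Q' = (\<Sum>k\<le>d. Polynomial.smult (c k) (p k))" using Suc.IH by blast
  have "Q = (\<Sum>k\<le>Suc d. Polynomial.smult ((c(Suc d := coeff Q (Suc d))) k) (p k))"
    using c unfolding Q'_def by (simp add: algebra_simps)
  then show ?case by blast
qed

lemma is_path_size:
  assumes "is_path r ns" shows "mi_size r (ns m) = m"
proof (induction m)
  case 0 then show ?case using assms unfolding is_path_def mi_size_def by simp
next
  case (Suc m)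
  obtain i where i: "i \<in> {1..r}" "ns (Suc m) = (ns m)(i := ns m i + 1)"
    using assms unfolding is_path_def by blast
  have "mi_size r (ns (Suc m)) = (ns m i + 1) + (\<Sum>j\<in>{1..r} - {i}. ns m j)"
    unfolding mi_size_def i(2) using i(1) by (subst sum.remove[of _ i]) auto
  also have "\<dots> = Suc (mi_size r (ns m))"
    unfolding mi_size_def using i(1) by (subst (2) sum.remove[of _ i]) auto
  finally show ?case using Suc by simp
qed

lemma is_path_mono:
  assumes "is_path r ns" and "m \<le> m'" shows "ns m j \<le> ns m' j"
proof -
  have "ns k j \<le> ns (Suc k) j" for k
    using assms(1) unfolding is_path_def by (metis fun_upd_apply le_add1 order_refl)
  then show ?thesis using lift_Suc_mono_le[of "\<lambda>k. ns k j"] assms(2) by blast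
qed

lemma ex_index_exceeding:
  fixes f :: "nat \<Rightarrow> 'j \<Rightarrow> nat"
  assumes "finite J" and "\<forall>j\<in>J. filterlim (\<lambda>m. f m j) at_top sequentially"
  shows "\<exists>N. \<forall>j\<in>J. c j < f N j"
proof -
  have "eventually (\<lambda>m. c j < f m j) sequentially" if "j \<in> J" for j
  proof -
    have "eventually (\<lambda>m. Suc (c j) \<le> f m j) sequentially"
      using assms(2) that unfolding filterlim_at_top by blast
    then show ?thesis by (rule eventually_mono) (simp add: Suc_le_eq)
  qed
  then have "eventually (\<lambda>m. \<forall>j\<in>J. c j < f m j) sequentially"
    by (intro eventually_ball_finite[OF assms(1)]) blast
  then show ?thesis using eventually_happens' sequentially_bot by blast
qed

locale perfect_moment_system =
  fixes r :: nat and \<mu>s :: "nat \<Rightarrow> real measure"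
  assumes integrable_power: "\<forall>j\<in>{1..r}. \<forall>k::nat. integrable (\<mu>s j) (\<lambda>x. x ^ k)"
    and perfect: "perfect_system r \<mu>s"
begin

definition L :: "nat \<Rightarrow> real poly \<Rightarrow> real" where
  "L j P = (\<integral>x. poly P x \<partial>\<mu>s j)"

definition pair :: "real poly \<Rightarrow> (nat \<Rightarrow> real poly) \<Rightarrow> real" where
  "pair q B = (\<Sum>j=1..r. L j (q * B j))"

(* Row i, column (j, t) holds int x^(i+t) d mu_j; applied to the coefficients c (j, t) of a vector
   with deg B_j < n_j it yields the pairings <x^i, B>, i < |n| (pair_monom_vec_of_coeffs). *)
definition moment_matrix :: "nat \<Rightarrow> nat \<times> nat \<Rightarrow> real" where
  "moment_matrix i a = L (fst a) (monom 1 (i + snd a))"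

definition coeff_index :: "(nat \<Rightarrow> nat) \<Rightarrow> (nat \<times> nat) set" where
  "coeff_index n = Sigma {1..r} (\<lambda>j. {..<n j})"

definition vec_of_coeffs :: "(nat \<Rightarrow> nat) \<Rightarrow> (nat \<times> nat \<Rightarrow> real) \<Rightarrow> nat \<Rightarrow> real poly" where
  "vec_of_coeffs n c j = (if j \<in> {1..r} then \<Sum>t<n j. monom (c (j, t)) t else 0)"

lemma integrable_poly: "j \<in> {1..r} \<Longrightarrow> integrable (\<mu>s j) (\<lambda>x. poly P x)"
proof -
  assume "j \<in> {1..r}"
  then have "integrable (\<mu>s j) (\<lambda>x. \<Sum>i\<le>degree P. coeff P i * x ^ i)"
    using integrable_power by (intro Bochner_Integration.integrable_sum integrable_mult_right) auto
  then show ?thesis unfolding poly_altdef .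
qed

lemma L_add: "j \<in> {1..r} \<Longrightarrow> L j (P + Q) = L j P + L j Q"
  unfolding L_def poly_add by (rule Bochner_Integration.integral_add) (use integrable_poly in auto)

lemma L_diff: "j \<in> {1..r} \<Longrightarrow> L j (P - Q) = L j P - L j Q"
  unfolding L_def poly_diff by (rule Bochner_Integration.integral_diff) (use integrable_poly in auto)

lemma L_smult: "L j (Polynomial.smult c P) = c * L j P"
  unfolding L_def poly_smult by (rule integral_mult_right_zero)

lemma L_monom: "L j (monom c k) = c * L j (monom 1 k)"
  by (metis L_smult smult_monom mult.right_neutral)

lemma L_sum: "j \<in> {1..r} \<Longrightarrow> finite K \<Longrightarrow> L j (\<Sum>k\<in>K. f k) = (\<Sum>k\<in>K. L j (f k))"
  unfolding L_def poly_sum by (rule Bochner_Integration.integral_sum) (use integrable_poly in auto)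

lemma integral_power_mult_poly: "(\<integral>x. x ^ k * poly P x \<partial>\<mu>s j) = L j (monom 1 k * P)"
proof -
  have "poly (monom 1 k * P) = (\<lambda>x. x ^ k * poly P x)" by (simp add: fun_eq_iff poly_monom)
  then show ?thesis unfolding L_def by simp
qed

lemma pair_cong: "(\<And>j. j \<in> {1..r} \<Longrightarrow> B j = C j) \<Longrightarrow> pair q B = pair q C"
  unfolding pair_def by simp

lemma pair_sum_left:
  assumes "finite K"
  shows "pair (\<Sum>m\<in>K. Polynomial.smult (c m) (f m)) B = (\<Sum>m\<in>K. c m * pair (f m) B)"
proof -
  have "L j ((\<Sum>m\<in>K. Polynomial.smult (c m) (f m)) * B j) = (\<Sum>m\<in>K. c m * L j (f m * B j))"
    if "j \<in> {1..r}" for j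
    using that assms by (simp add: sum_distrib_right L_sum L_smult)
  then show ?thesis
    unfolding pair_def by (simp add: sum.swap[of _ K] sum_distrib_left)
qed

lemma pair_sum_right:
  assumes "finite K"
  shows "pair q (\<lambda>j. \<Sum>k\<in>K. Polynomial.smult (c k) (B k j)) = (\<Sum>k\<in>K. c k * pair q (B k))"
proof -
  have "L j (q * (\<Sum>k\<in>K. Polynomial.smult (c k) (B k j))) = (\<Sum>k\<in>K. c k * L j (q * B k j))"
    if "j \<in> {1..r}" for j
    using that assms by (simp add: sum_distrib_left L_sum L_smult)
  then show ?thesis
    unfolding pair_def by (simp add: sum.swap[of _ K] sum_distrib_left)
qed

lemma pair_diff_right: "pair q (\<lambda>j. B j - C j) = pair q B - pair q C"
  unfolding pair_def by (simp add: right_diff_distrib L_diff sum_subtractf)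

lemma pair_x_mult: "pair ([:0, 1:] * q) B = pair q (\<lambda>j. [:0, 1:] * B j)"
  unfolding pair_def by (simp add: ac_simps)

lemma sum_integral_eq_pair:
  "(\<Sum>j=1..r. \<integral>x. x ^ k * poly (B j) x \<partial>\<mu>s j) = pair (monom 1 k) B"
  unfolding pair_def by (simp add: integral_power_mult_poly)

lemma typeII_poly_typeII: "typeII r \<mu>s n (typeII_poly r \<mu>s n)"
  using perfect unfolding perfect_system_def typeII_poly_def by (metis theI')

lemma typeII_orthogonal:
  assumes P: "typeII r \<mu>s n P" and j: "j \<in> {1..r}" and Q: "deg_less Q (n j)"
  shows "L j (Q * P) = 0"
proof -
  have "Q * P = (\<Sum>i<n j. Polynomial.smult (coeff Q i) (monom 1 i * P))"
    by (subst deg_less_eq_sum_monom[OF Q]) (simp add: sum_distrib_right smult_monom_mult)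
  then have "L j (Q * P) = (\<Sum>i<n j. coeff Q i * L j (monom 1 i * P))"
    using j by (simp add: L_sum L_smult)
  also have "\<dots> = 0"
    using P j unfolding typeII_def by (simp add: integral_power_mult_poly)
  finally show ?thesis .
qed

lemma finite_coeff_index: "finite (coeff_index n)"
  unfolding coeff_index_def by simp

lemma card_coeff_index: "card (coeff_index n) = mi_size r n"
  unfolding coeff_index_def mi_size_def by simp

lemma pair_monom_vec_of_coeffs:
  "pair (monom 1 i) (vec_of_coeffs n c) = (\<Sum>a\<in>coeff_index n. moment_matrix i a * c a)"
proof -
  have "L j (monom 1 i * vec_of_coeffs n c j) = (\<Sum>t<n j. moment_matrix i (j, t) * c (j, t))"
    if "j \<in> {1..r}" for j
    using that
    by (simp add: vec_of_coeffs_def moment_matrix_def sum_distrib_left mult_monom L_sum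
        L_monom[of j "c _"] mult.commute)
  then have "pair (monom 1 i) (vec_of_coeffs n c)
      = (\<Sum>j\<in>{1..r}. \<Sum>t<n j. moment_matrix i (j, t) * c (j, t))"
    unfolding pair_def by simp
  also have "\<dots> = (\<Sum>a\<in>coeff_index n. moment_matrix i a * c a)"
    unfolding coeff_index_def by (simp add: sum.Sigma case_prod_beta)
  finally show ?thesis .
qed

lemma vec_of_coeffs_coeff:
  assumes "deg_less (B j) (n j)" and "j \<in> {1..r}"
  shows "vec_of_coeffs n (\<lambda>(j, t). coeff (B j) t) j = B j"
  using assms(2) deg_less_eq_sum_monom[OF assms(1), symmetric] by (simp add: vec_of_coeffs_def)

lemma deg_less_vec_of_coeffs: "deg_less (vec_of_coeffs n c j) (n j)"
  by (simp add: vec_of_coeffs_def deg_less_sum_monom deg_less_iff[of 0])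

(* A left null vector v of the moment matrix gives a polynomial q of degree < |n| that can be added
   to the type II polynomial without violating its conditions; uniqueness forces q = 0. *)
lemma moment_matrix_transpose_injective:
  assumes v: "\<forall>a\<in>coeff_index n. (\<Sum>i<mi_size r n. v i * moment_matrix i a) = 0"
  shows "\<forall>i<mi_size r n. v i = 0"
proof -
  define N where "N = mi_size r n"
  define q where "q = (\<Sum>i<N. monom (v i) i)"
  define P where "P = typeII_poly r \<mu>s n"
  have P: "typeII r \<mu>s n P" unfolding P_def by (rule typeII_poly_typeII)
  have q_orthogonal: "L j (monom 1 t * q) = 0" if "j \<in> {1..r}" "t < n j" for j t
  proof -
    have "L j (monom 1 t * q) = (\<Sum>i<N. v i * moment_matrix i (j, t))"
      unfolding q_def moment_matrix_def using that(1)
      by (simp add: sum_distrib_left mult_monom L_sum L_monom[of j "v _"] add.commute)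
    also have "\<dots> = 0" using v that unfolding coeff_index_def N_def by auto
    finally show ?thesis .
  qed
  have q_small: "q = 0 \<or> degree q < N"
    using deg_less_sum_monom[of v N] unfolding q_def deg_less_iff .
  have P_deg: "degree P = N" "lead_coeff P = 1" using P unfolding typeII_def N_def by auto
  have "degree (P + q) = N"
    using q_small P_deg by (metis add.right_neutral degree_add_eq_left)
  moreover have "coeff (P + q) N = 1"
    using q_small P_deg by (auto simp: coeff_eq_0)
  moreover have "(\<integral>x. x ^ k * poly (P + q) x \<partial>\<mu>s j) = 0" if "j \<in> {1..r}" "k < n j" for j k
  proof -
    have "L j (monom 1 k * P) = 0"
      using P that unfolding typeII_def by (simp add: integral_power_mult_poly)
    then show ?thesis
      using q_orthogonal[OF that] that(1)
      unfolding integral_power_mult_poly distrib_left by (simp add: L_add)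
  qed
  ultimately have "typeII r \<mu>s n (P + q)" unfolding typeII_def N_def by auto
  then have "q = 0" using perfect P unfolding perfect_system_def by (metis add_cancel_left_right)
  moreover have "coeff q i = v i" if "i < N" for i
    unfolding q_def using that by (simp add: coeff_sum)
  ultimately show ?thesis unfolding N_def by simp
qed

lemma pair_monoms_injective:
  assumes B: "\<forall>j\<in>{1..r}. deg_less (B j) (n j)"
    and zero: "\<forall>i<mi_size r n. pair (monom 1 i) B = 0"
    and j: "j \<in> {1..r}"
  shows "B j = 0"
proof -
  define c where "c = (\<lambda>(j, t). coeff (B j) t)"
  have B_eq: "vec_of_coeffs n c j = B j" if "j \<in> {1..r}" for j
    unfolding c_def using B that by (simp add: vec_of_coeffs_coeff)
  have "pair q (vec_of_coeffs n c) = pair q B" for q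
    using B_eq by (rule pair_cong)
  then have "\<forall>i<mi_size r n. (\<Sum>a\<in>coeff_index n. moment_matrix i a * c a) = 0"
    using zero by (simp add: pair_monom_vec_of_coeffs[symmetric])
  then have "\<forall>a\<in>coeff_index n. c a = 0"
    using square_system(2)[OF finite_coeff_index card_coeff_index, where M = moment_matrix]
      moment_matrix_transpose_injective by blast
  then have "c (j, t) = 0" if "t < n j" for t
    using j that unfolding coeff_index_def by blast
  then have "vec_of_coeffs n c j = 0" by (simp add: vec_of_coeffs_def)
  then show ?thesis using B_eq[OF j] by simp
qed

lemma pair_monoms_surjective:
  "\<exists>B. (\<forall>j. j \<notin> {1..r} \<longrightarrow> B j = 0) \<and> (\<forall>j\<in>{1..r}. deg_less (B j) (n j)) \<and>
       (\<forall>i<mi_size r n. pair (monom 1 i) B = e i)"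
proof -
  obtain c where c: "\<forall>i<mi_size r n. (\<Sum>a\<in>coeff_index n. moment_matrix i a * c a) = e i"
    using square_system(1)[OF finite_coeff_index card_coeff_index, where M = moment_matrix]
      moment_matrix_transpose_injective
    by blast
  show ?thesis
  proof (intro exI conjI)
    show "\<forall>j. j \<notin> {1..r} \<longrightarrow> vec_of_coeffs n c j = 0" by (simp add: vec_of_coeffs_def)
    show "\<forall>j\<in>{1..r}. deg_less (vec_of_coeffs n c j) (n j)" by (simp add: deg_less_vec_of_coeffs)
    show "\<forall>i<mi_size r n. pair (monom 1 i) (vec_of_coeffs n c) = e i"
      using c by (simp add: pair_monom_vec_of_coeffs)
  qed
qed

lemma typeI_iff_pair:
  assumes "mi_size r n \<ge> 1"
  shows "typeI r \<mu>s n A \<longleftrightarrow> (\<forall>j. j \<notin> {1..r} \<longrightarrow> A j = 0) \<and> (\<forall>j\<in>{1..r}. deg_less (A j) (n j)) \<and>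
    (\<forall>i<mi_size r n. pair (monom 1 i) A = (if i = mi_size r n - 1 then 1 else 0))"
  unfolding typeI_def sum_integral_eq_pair deg_less_iff using assms
  by (auto simp: le_diff_conv2)

lemma typeI_vec_typeI: "mi_size r n \<ge> 1 \<Longrightarrow> typeI r \<mu>s n (typeI_vec r \<mu>s n)"
proof -
  assume N: "mi_size r n \<ge> 1"
  have "\<exists>!A. typeI r \<mu>s n A"
  proof (rule ex_ex1I)
    show "\<exists>A. typeI r \<mu>s n A"
      using pair_monoms_surjective[of n "\<lambda>i. if i = mi_size r n - 1 then 1 else 0"]
      unfolding typeI_iff_pair[OF N] .
  next
    fix A1 A2 assume A1: "typeI r \<mu>s n A1" and A2: "typeI r \<mu>s n A2"
    have diff_zero: "A1 j - A2 j = 0" if "j \<in> {1..r}" for j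
      using A1 A2 that unfolding typeI_iff_pair[OF N]
      by (intro pair_monoms_injective[where B = "\<lambda>j. A1 j - A2 j" and n = n])
        (simp_all add: pair_diff_right deg_less_diff)
    show "A1 = A2"
    proof
      fix j show "A1 j = A2 j"
        using diff_zero[of j] A1 A2 unfolding typeI_iff_pair[OF N] by (cases "j \<in> {1..r}") auto
    qed
  qed
  then show ?thesis unfolding typeI_vec_def by (rule theI')
qed

end

locale perfect_path = perfect_moment_system +
  fixes ns :: "nat \<Rightarrow> nat \<Rightarrow> nat"
  assumes path: "is_path r ns"
begin

abbreviation p :: "nat \<Rightarrow> real poly" where
  "p m \<equiv> typeII_poly r \<mu>s (ns m)"

(* Index shift as in the paper: A l is the type I vector of ns (Suc l), so q_l = sum_j A l j w_j. *)
abbreviation A :: "nat \<Rightarrow> nat \<Rightarrow> real poly" where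
  "A l \<equiv> typeI_vec r \<mu>s (ns (Suc l))"

abbreviation J :: "nat \<Rightarrow> nat \<Rightarrow> real" where
  "J \<equiv> Jmat r \<mu>s ns"

lemma degree_p: "degree (p m) = m" and lead_coeff_p: "lead_coeff (p m) = 1"
  using typeII_poly_typeII[of "ns m"] is_path_size[OF path] unfolding typeII_def by auto

lemma typeI_A:
  "(\<forall>j\<in>{1..r}. deg_less (A l j) (ns (Suc l) j)) \<and>
   (\<forall>i<Suc l. pair (monom 1 i) (A l) = (if i = l then 1 else 0))"
proof -
  have size: "mi_size r (ns (Suc l)) = Suc l" by (rule is_path_size[OF path])
  then have "typeI r \<mu>s (ns (Suc l)) (A l)" by (intro typeI_vec_typeI) simp
  then show ?thesis unfolding typeI_iff_pair[of "ns (Suc l)", unfolded size, simplified] by simp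
qed

lemma deg_less_A: "j \<in> {1..r} \<Longrightarrow> deg_less (A l j) (ns (Suc l) j)"
  using typeI_A by blast

lemma pair_p_eq_0:
  assumes "\<forall>j\<in>{1..r}. deg_less (B j) (ns m j)"
  shows "pair (p m) B = 0"
  unfolding pair_def using typeII_orthogonal[OF typeII_poly_typeII] assms by (simp add: mult.commute)

lemma pair_p_A: "pair (p m) (A l) = (if m = l then 1 else 0)"
proof (cases "m \<le> l")
  case True
  have "p m = (\<Sum>i\<le>l. Polynomial.smult (coeff (p m) i) (monom 1 i))"
    using poly_as_sum_of_monoms'[of "p m" l] True degree_p[of m] by (simp add: smult_monom)
  then have "pair (p m) (A l) = (\<Sum>i\<le>l. coeff (p m) i * pair (monom 1 i) (A l))"
    by (metis finite_atMost pair_sum_left)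
  also have "\<dots> = (\<Sum>i\<le>l. if i = l then coeff (p m) i else 0)"
    using typeI_A[of l] by (intro sum.cong refl) (simp add: less_Suc_eq_le)
  also have "\<dots> = coeff (p m) l" by simp
  also have "\<dots> = (if m = l then 1 else 0)"
    using True degree_p[of m] lead_coeff_p[of m] by (auto simp: coeff_eq_0)
  finally show ?thesis .
next
  case False
  have "deg_less (A l j) (ns m j)" if "j \<in> {1..r}" for j
  proof (rule deg_less_mono[OF deg_less_A[OF that]])
    show "ns (Suc l) j \<le> ns m j" using is_path_mono[OF path] False by simp
  qed
  then show ?thesis using False pair_p_eq_0 by simp
qed

lemma pair_expansion_A:
  "pair (\<Sum>m\<le>d. Polynomial.smult (c m) (p m)) (A l) = (if l \<le> d then c l else 0)"
proof -
  have "pair (\<Sum>m\<le>d. Polynomial.smult (c m) (p m)) (A l) = (\<Sum>m\<le>d. c m * pair (p m) (A l))"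
    by (rule pair_sum_left) simp
  also have "\<dots> = (\<Sum>m\<le>d. if m = l then c l else 0)"
    by (intro sum.cong refl) (simp add: pair_p_A)
  finally show ?thesis by simp
qed

lemma eq_0_if_orthogonal_to_p:
  assumes B: "\<forall>j\<in>{1..r}. deg_less (B j) (ns m j)"
    and orthogonal: "\<forall>k<m. pair (p k) B = 0" and j: "j \<in> {1..r}"
  shows "B j = 0"
proof (rule pair_monoms_injective[OF B _ j], intro allI impI)
  fix i assume "i < mi_size r (ns m)"
  then have i: "i < m" using is_path_size[OF path] by simp
  have "degree (monom (1::real) i) \<le> i" by (rule degree_monom_le)
  then obtain c where "monom 1 i = (\<Sum>k\<le>i. Polynomial.smult (c k) (p k))"
    using monic_basis_expansion[OF degree_p lead_coeff_p] by blast
  then have "pair (monom 1 i) B = (\<Sum>k\<le>i. c k * pair (p k) B)"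
    by (simp add: pair_sum_left)
  also have "\<dots> = 0" using orthogonal i by (intro sum.neutral) auto
  finally show "pair (monom 1 i) B = 0" .
qed

lemma Jmat_recurrence:
  "(\<forall>m>Suc k. J k m = 0) \<and> [:0, 1:] * p k = (\<Sum>m\<le>Suc k. Polynomial.smult (J k m) (p m))"
proof -
  let ?rec = "\<lambda>c. (\<forall>m>Suc k. c m = 0) \<and>
    [:0, 1:] * p k = (\<Sum>m\<le>Suc k. Polynomial.smult (c m) (p m))"
  have "\<exists>!c. ?rec c"
  proof (rule ex_ex1I)
    have "p k \<noteq> 0" using lead_coeff_p[of k] by auto
    then have "degree ([:0, 1:] * p k) \<le> Suc k" using degree_p[of k] by simp
    then have "\<exists>c. [:0, 1:] * p k = (\<Sum>m\<le>Suc k. Polynomial.smult (c m) (p m))"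
      by (rule monic_basis_expansion[OF degree_p lead_coeff_p])
    then obtain c where c: "[:0, 1:] * p k = (\<Sum>m\<le>Suc k. Polynomial.smult (c m) (p m))" ..
    have truncate: "(\<Sum>m\<le>Suc k. Polynomial.smult (c m) (p m))
        = (\<Sum>m\<le>Suc k. Polynomial.smult (if m \<le> Suc k then c m else 0) (p m))"
      by (intro sum.cong) auto
    have truncated: "?rec (\<lambda>m. if m \<le> Suc k then c m else 0)"
    proof
      show "[:0, 1:] * p k = (\<Sum>m\<le>Suc k. Polynomial.smult (if m \<le> Suc k then c m else 0) (p m))"
        using c truncate by (rule trans)
    qed simp
    show "\<exists>c. ?rec c" by (rule exI[of ?rec, OF truncated])
  next
    fix c1 c2 assume c1: "?rec c1" and c2: "?rec c2"
    have coeff_eq: "c m = pair ([:0, 1:] * p k) (A m)" if "?rec c" "m \<le> Suc k" for c m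
      unfolding conjunct2[OF that(1)] pair_expansion_A using that(2) by simp
    show "c1 = c2"
    proof
      fix m show "c1 m = c2 m"
        using coeff_eq[OF c1, of m] coeff_eq[OF c2, of m] c1 c2 by (cases "m \<le> Suc k") auto
    qed
  qed
  then show ?thesis unfolding Jmat_def by (rule theI')
qed

lemma Jmat_eq_pair: "J k l = pair (p k) (\<lambda>j. [:0, 1:] * A l j)"
proof -
  have "pair ([:0, 1:] * p k) (A l) = (if l \<le> Suc k then J k l else 0)"
    unfolding conjunct2[OF Jmat_recurrence[of k]] by (rule pair_expansion_A)
  also have "\<dots> = J k l"
    using conjunct1[OF Jmat_recurrence[of k]] by simp
  finally show ?thesis by (simp only: pair_x_mult)
qed

lemma Jmat_eq_0:
  assumes "\<forall>j\<in>{1..r}. ns (Suc l) j < ns k j"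
  shows "J k l = 0"
  unfolding Jmat_eq_pair
proof (intro pair_p_eq_0 ballI)
  fix j assume j: "j \<in> {1..r}"
  show "deg_less ([:0, 1:] * A l j) (ns k j)"
    using deg_less_mono[OF deg_less_x_mult[OF deg_less_A[OF j]]] assms j by (simp add: Suc_le_eq)
qed

lemma x_mult_A:
  assumes N: "\<forall>j\<in>{1..r}. ns (Suc l) j < ns N j" and j: "j \<in> {1..r}"
  shows "[:0, 1:] * A l j = (\<Sum>k\<le>N. Polynomial.smult (J k l) (A k j))"
proof -
  define D where "D j = [:0, 1:] * A l j - (\<Sum>k\<le>N. Polynomial.smult (J k l) (A k j))" for j
  have "deg_less (D j) (ns (Suc N) j)" if "j \<in> {1..r}" for j
  proof -
    have "Suc (ns (Suc l) j) \<le> ns (Suc N) j"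
      using N that is_path_mono[OF path, of N "Suc N" j] by fastforce
    then have "deg_less ([:0, 1:] * A l j) (ns (Suc N) j)"
      by (rule deg_less_mono[OF deg_less_x_mult[OF deg_less_A[OF that]]])
    moreover have "deg_less (A k j) (ns (Suc N) j)" if "k \<le> N" for k
      using is_path_mono[OF path, of "Suc k" "Suc N" j] that
      by (intro deg_less_mono[OF deg_less_A[OF \<open>j \<in> {1..r}\<close>]]) simp
    ultimately show ?thesis unfolding D_def by (intro deg_less_diff deg_less_sum deg_less_smult) auto
  qed
  moreover have "pair (p m) D = 0" if "m < Suc N" for m
  proof -
    have "pair (p m) D = J m l - (\<Sum>k\<le>N. J k l * pair (p m) (A k))"
      unfolding D_def pair_diff_right by (simp add: pair_sum_right Jmat_eq_pair)
    also have "(\<Sum>k\<le>N. J k l * pair (p m) (A k)) = (\<Sum>k\<le>N. if k = m then J m l else 0)"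
      by (intro sum.cong refl) (simp add: pair_p_A)
    finally show ?thesis using that by simp
  qed
  ultimately have "D j = 0" using j by (intro eq_0_if_orthogonal_to_p[where m = "Suc N"]) auto
  then show ?thesis unfolding D_def by simp
qed

lemma x_mult_Qfun:
  assumes "\<forall>j\<in>{1..r}. ns (Suc l) j < ns N j"
  shows "x * Qfun r \<mu>s w (ns (Suc l)) x = (\<Sum>k\<le>N. J k l * Qfun r \<mu>s w (ns (Suc k)) x)"
proof -
  have "x * Qfun r \<mu>s w (ns (Suc l)) x = (\<Sum>j=1..r. poly ([:0, 1:] * A l j) x * w j x)"
    unfolding Qfun_def by (simp add: sum_distrib_left ac_simps)
  also have "\<dots> = (\<Sum>j=1..r. \<Sum>k\<le>N. J k l * (poly (A k j) x * w j x))"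
    using x_mult_A[OF assms] by (intro sum.cong refl) (simp add: poly_sum sum_distrib_right mult.assoc)
  also have "\<dots> = (\<Sum>k\<le>N. J k l * Qfun r \<mu>s w (ns (Suc k)) x)"
    unfolding Qfun_def sum_distrib_left by (rule sum.swap)
  finally show ?thesis .
qed

end

theorem proposition2:
  fixes r :: nat and \<mu>s :: "nat \<Rightarrow> real measure" and \<mu> :: "real measure"
    and w :: "nat \<Rightarrow> real \<Rightarrow> real" and ns :: "nat \<Rightarrow> nat \<Rightarrow> nat" and l :: nat
  assumes "r \<ge> 1"
    and "\<forall>j\<in>{1..r}. sets (\<mu>s j) = sets borel"
    and "\<forall>j\<in>{1..r}. \<forall>k::nat. integrable (\<mu>s j) (\<lambda>x. x ^ k)"
    and "perfect_system r \<mu>s"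
    and "sets \<mu> = sets borel"
    and "\<forall>j\<in>{1..r}. w j \<in> borel_measurable borel \<and> (\<forall>x. 0 \<le> w j x) \<and>
           \<mu>s j = density \<mu> (\<lambda>x. ennreal (w j x))"
    and "is_path r ns"
    and "\<forall>j\<in>{1..r}. filterlim (\<lambda>m. ns m j) at_top sequentially"
  shows "\<exists>N. (\<forall>k>N. Jmat r \<mu>s ns k l = 0) \<and>
    (\<forall>x. x * Qfun r \<mu>s w (ns (Suc l)) x =
         (\<Sum>k\<le>N. Jmat r \<mu>s ns k l * Qfun r \<mu>s w (ns (Suc k)) x))"
proof -
  interpret perfect_path r \<mu>s ns
    using assms(3,4,7) by unfold_locales
  obtain N where N: "\<forall>j\<in>{1..r}. ns (Suc l) j < ns N j"
    using ex_index_exceeding[of "{1..r}" ns "ns (Suc l)"] assms(8) by blast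
  have "J k l = 0" if "k > N" for k
    using N is_path_mono[OF assms(7), of N k] that by (intro Jmat_eq_0) (auto intro: less_le_trans)
  then show ?thesis using x_mult_Qfun[OF N] by blast
qed

end
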